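(* Let $\boldsymbol{\tau}=(\tau_n\colon\mathcal{A}_{n+1}^+\to\mathcal{A}_n^+)_{n\in\mathbb{N}}$ be an everywhere growing and proper directive sequence. For $n\in\mathbb{N}$ let $\tilde{\mathcal{A}}_n=\mathcal{A}_n\cap\mathcal{L}(X^{(n)}_{\boldsymbol{\tau}})$ and let $\tilde\tau_n$ be the restriction of $\tau_n$ to $\tilde{\mathcal{A}}_{n+1}^+$. Then each $\tilde\tau_n$ takes values in $\tilde{\mathcal{A}}_n^+$, the directive sequence $\tilde{\boldsymbol{\tau}}=(\tilde\tau_n\colon\tilde{\mathcal{A}}_{n+1}^+\to\tilde{\mathcal{A}}_n^+)_{n\in\mathbb{N}}$ is letter-onto, and $X^{(n)}_{\tilde{\boldsymbol{\tau}}}=X^{(n)}_{\boldsymbol{\tau}}$ for every $n\in\mathbb{N}$. Conversely, if $\boldsymbol{\tau}$ is letter-onto, then $\mathcal{A}_n\subseteq\mathcal{L}(X^{(n)}_{\boldsymbol{\tau}})$ for every $n\in\mathbb{N}$.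
   Context: An alphabet is a finite set; $\mathcal{A}^+$ is the set of nonempty finite words. A morphism $\sigma\colon\mathcal{A}^+\to\mathcal{B}^+$ is a semigroup homomorphism; proper if there are letters $u,v$ such that every $\sigma(a)$ starts with $u$ and ends with $v$; letter-onto if every $b\in\mathcal{B}$ occurs in some $\sigma(a)$. For a directive sequence $\boldsymbol{\tau}=(\tau_n\colon\mathcal{A}_{n+1}^+\to\mathcal{A}_n^+)$, $\tau_{[n,N)}=\tau_n\circ\cdots\circ\tau_{N-1}$, the $n$th level is $X^{(n)}_{\boldsymbol{\tau}}=\{x\in\mathcal{A}_n^{\mathbb{Z}}:\forall\ell,\ x_{[-\ell,\ell]}$ occurs in $\tau_{[n,N)}(a)$ for some $N>n,a\in\mathcal{A}_N\}$. The sequence is everywhere growing if $\min_{a\in\mathcal{A}_N}|\tau_{[0,N)}(a)|\to\infty$, and proper / letter-onto if each $\tau_n$ is. The language $\mathcal{L}(X)$ of a subshift $X$ is the set of finite words occurring in some point of $X$ (so $\mathcal{A}_n\cap\mathcal{L}(X)$ is the set of letters occurring in points of $X$). *)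

theory Defs
  imports Main "HOL-Library.Sublist"
begin

text \<open>A morphism sigma : A^+ -> B^+ is represented by its action on letters
  (a function 'a => 'a list); it acts on words by concatenation.
  A directive sequence is a family of alphabets A :: nat => 'a set together with
  letter maps tau :: nat => 'a => 'a list, tau n : A (n+1)^+ -> A n ^+.\<close>

definition morph_word :: "('a \<Rightarrow> 'a list) \<Rightarrow> 'a list \<Rightarrow> 'a list" where
  "morph_word \<sigma> w = concat (map \<sigma> w)"

text \<open>tau_comp tau n k = tau_[n, n+k) = tau_n o ... o tau_(n+k-1), on letters.\<close>
fun tau_comp :: "(nat \<Rightarrow> 'a \<Rightarrow> 'a list) \<Rightarrow> nat \<Rightarrow> nat \<Rightarrow> 'a \<Rightarrow> 'a list" where
  "tau_comp \<tau> n 0 = (\<lambda>a. [a])"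
| "tau_comp \<tau> n (Suc k) = (\<lambda>a. morph_word (tau_comp \<tau> n k) (\<tau> (n + k) a))"

definition directive_seq :: "(nat \<Rightarrow> 'a set) \<Rightarrow> (nat \<Rightarrow> 'a \<Rightarrow> 'a list) \<Rightarrow> bool" where
  "directive_seq A \<tau> \<longleftrightarrow> (\<forall>n. finite (A n)) \<and>
     (\<forall>n. \<forall>a\<in>A (Suc n). \<tau> n a \<noteq> [] \<and> set (\<tau> n a) \<subseteq> A n)"

definition proper_seq :: "(nat \<Rightarrow> 'a set) \<Rightarrow> (nat \<Rightarrow> 'a \<Rightarrow> 'a list) \<Rightarrow> bool" where
  "proper_seq A \<tau> \<longleftrightarrow> (\<forall>n. \<exists>u v. \<forall>a\<in>A (Suc n).
      \<tau> n a \<noteq> [] \<and> hd (\<tau> n a) = u \<and> last (\<tau> n a) = v)"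

definition letter_onto_seq :: "(nat \<Rightarrow> 'a set) \<Rightarrow> (nat \<Rightarrow> 'a \<Rightarrow> 'a list) \<Rightarrow> bool" where
  "letter_onto_seq A \<tau> \<longleftrightarrow> (\<forall>n. \<forall>b\<in>A n. \<exists>a\<in>A (Suc n). b \<in> set (\<tau> n a))"

definition everywhere_growing :: "(nat \<Rightarrow> 'a set) \<Rightarrow> (nat \<Rightarrow> 'a \<Rightarrow> 'a list) \<Rightarrow> bool" where
  "everywhere_growing A \<tau> \<longleftrightarrow>
     (\<forall>L::nat. \<exists>N0. \<forall>N\<ge>N0. \<forall>a\<in>A N. L \<le> length (tau_comp \<tau> 0 N a))"

definition central_word :: "(int \<Rightarrow> 'a) \<Rightarrow> nat \<Rightarrow> 'a list" where
  "central_word x l = map (\<lambda>i. x (int i - int l)) [0..<2 * l + 1]"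

definition level :: "(nat \<Rightarrow> 'a set) \<Rightarrow> (nat \<Rightarrow> 'a \<Rightarrow> 'a list) \<Rightarrow> nat \<Rightarrow> (int \<Rightarrow> 'a) set" where
  "level A \<tau> n = {x. (\<forall>i. x i \<in> A n) \<and>
     (\<forall>l. \<exists>N>n. \<exists>a\<in>A N. sublist (central_word x l) (tau_comp \<tau> n (N - n) a))}"

definition lang :: "(int \<Rightarrow> 'a) set \<Rightarrow> 'a list set" where
  "lang X = {w. \<exists>x\<in>X. \<exists>i::int. w = map (\<lambda>j. x (i + int j)) [0..<length w]}"

end

theory Submission
  imports Defs
begin

text \<open>
  A letter occurs in a point of the \<open>n\<close>-th level iff it is extendable: it occurs in the language
  of level \<open>n\<close> with arbitrarily long contexts on both sides. Points supply such contexts through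
  their central words; conversely an extendable word can be grown symmetrically letter by letter,
  and in the limit (Koenig's lemma) this yields a point.
  Extendability is preserved by \<open>\<tau>\<^sub>n\<close>, and an extendable word has, at every higher level, an
  extendable minimal preimage. For a letter this preimage is one letter, so the restricted sequence
  is letter-onto. For a word \<open>w\<close> of a point, desubstituting until all images are longer than \<open>w\<close>
  leaves one letter or two; in the latter case properness places \<open>w\<close> inside the junction
  \<open>\<tau>(V) \<tau>(U)\<close> of the common last and first letters, which itself occurs in the image of an
  extendable letter.
  If the sequence is letter-onto, every letter lies in the image of a letter \<open>b\<close> that has a
  context \<open>d b e\<close> (again by the junction), and the images of \<open>d\<close> and \<open>e\<close> are long.
\<close>

section \<open>Morphisms on words\<close>

lemma morph_word_Nil [simp]: "morph_word f [] = []"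
  by (simp add: morph_word_def)

lemma morph_word_Cons [simp]: "morph_word f (a # w) = f a @ morph_word f w"
  by (simp add: morph_word_def)

lemma morph_word_append [simp]: "morph_word f (u @ v) = morph_word f u @ morph_word f v"
  by (simp add: morph_word_def)

lemma morph_word_singleton [simp]: "morph_word (\<lambda>a. [a]) w = w"
  by (induct w) auto

lemma morph_word_morph_word:
  "morph_word f (morph_word g w) = morph_word (\<lambda>b. morph_word f (g b)) w"
  by (induct w) auto

lemma set_morph_word: "set (morph_word f w) = (\<Union>b\<in>set w. set (f b))"
  by (induct w) auto

lemma sublist_morph_word: "sublist u v \<Longrightarrow> sublist (morph_word f u) (morph_word f v)"
  unfolding sublist_def by (metis morph_word_append)

lemma length_morph_word_ge:
  "(\<And>b. b \<in> set w \<Longrightarrow> f b \<noteq> []) \<Longrightarrow> length w \<le> length (morph_word f w)"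
proof (induct w)
  case (Cons a w)
  then have "0 < length (f a)" "length w \<le> length (morph_word f w)" by auto
  then show ?case by (simp only: morph_word_Cons length_append list.size)
qed simp

lemma length_morph_word_le:
  "(\<And>b. b \<in> set w \<Longrightarrow> length (f b) \<le> K) \<Longrightarrow> length (morph_word f w) \<le> K * length w"
  by (induct w) (auto intro: add_mono)

lemma length_le_length_morph_word: "b \<in> set w \<Longrightarrow> length (f b) \<le> length (morph_word f w)"
  by (induct w) auto

lemma morph_word_nonempty: "w \<noteq> [] \<Longrightarrow> (\<And>b. b \<in> set w \<Longrightarrow> f b \<noteq> []) \<Longrightarrow> morph_word f w \<noteq> []"
  by (cases w) auto

lemma hd_morph_word: "w \<noteq> [] \<Longrightarrow> f (hd w) \<noteq> [] \<Longrightarrow> hd (morph_word f w) = hd (f (hd w))"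
  by (cases w) auto

lemma last_morph_word: "w \<noteq> [] \<Longrightarrow> f (last w) \<noteq> [] \<Longrightarrow> last (morph_word f w) = last (f (last w))"
  by (induct w rule: rev_induct) auto

lemma sublist_singleton: "a \<in> set w \<Longrightarrow> sublist [a] w"
  by (metis split_list sublist_appendI append_Cons append_Nil)

lemma tau_comp_add:
  "tau_comp \<tau> n (j + k) a = morph_word (tau_comp \<tau> n j) (tau_comp \<tau> (n + j) k a)"
proof (induct k arbitrary: a)
  case (Suc k)
  then have "(\<lambda>b. morph_word (tau_comp \<tau> n j) (tau_comp \<tau> (n + j) k b)) = tau_comp \<tau> n (j + k)"
    by auto
  then show ?case by (simp add: morph_word_morph_word add.assoc)
qed simp

lemma tau_comp_one: "tau_comp \<tau> n 1 = \<tau> n"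
  by auto

lemma tau_comp_Suc_left: "tau_comp \<tau> n (Suc k) a = morph_word (\<tau> n) (tau_comp \<tau> (Suc n) k a)"
  using tau_comp_add[of \<tau> n 1 k a] by (simp add: tau_comp_one)

lemma letter_onto_seq_tau_comp:
  assumes "letter_onto_seq B \<tau>" and "a \<in> B n"
  shows "\<exists>b\<in>B (n + k). a \<in> set (tau_comp \<tau> n k b)"
proof (induct k)
  case 0
  then show ?case using assms(2) by auto
next
  case (Suc k)
  then obtain b where b: "b \<in> B (n + k)" "a \<in> set (tau_comp \<tau> n k b)" by blast
  obtain c where "c \<in> B (Suc (n + k))" "b \<in> set (\<tau> (n + k) c)"
    using assms(1) b(1) unfolding letter_onto_seq_def by blast
  with b(2) show ?case by (auto simp: set_morph_word)
qed

section \<open>Minimal covers\<close>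

definition min_cover :: "('a \<Rightarrow> 'a list) \<Rightarrow> 'a list \<Rightarrow> 'a list \<Rightarrow> bool" where
  "min_cover f v w \<longleftrightarrow> (\<exists>\<alpha> \<beta>. morph_word f v = \<alpha> @ w @ \<beta> \<and>
     length \<alpha> < length (f (hd v)) \<and> length \<beta> < length (f (last v)))"

lemma morph_word_split_left:
  "(\<And>b. b \<in> set h \<Longrightarrow> f b \<noteq> []) \<Longrightarrow> morph_word f h = P @ z \<Longrightarrow> z \<noteq> [] \<Longrightarrow>
   \<exists>hp h' \<alpha>. h = hp @ h' \<and> morph_word f h' = \<alpha> @ z \<and> length \<alpha> < length (f (hd h'))
     \<and> P = morph_word f hp @ \<alpha>"
proof (induct h arbitrary: P)
  case (Cons b t)
  show ?case
  proof (cases "length P < length (f b)")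
    case True
    then show ?thesis using Cons.prems
      by (intro exI[of _ "[]"] exI[of _ "b # t"] exI[of _ P]) auto
  next
    case False
    from Cons.prems(2) have "f b @ morph_word f t = P @ z" by simp
    with False have "f b = take (length (f b)) P" "morph_word f t = drop (length (f b)) P @ z"
      by (simp_all add: append_eq_append_conv_if)
    then obtain P' where P': "P = f b @ P'" "morph_word f t = P' @ z"
      by (metis append_take_drop_id)
    from Cons.hyps[OF _ P'(2) Cons.prems(3)] Cons.prems(1) obtain hp h' \<alpha> where
      "t = hp @ h'" "morph_word f h' = \<alpha> @ z" "length \<alpha> < length (f (hd h'))"
      "P' = morph_word f hp @ \<alpha>"
      by auto
    with P' show ?thesis by (intro exI[of _ "b # hp"] exI[of _ h'] exI[of _ \<alpha>]) auto
  qed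
qed simp

lemma morph_word_split_right:
  "morph_word f h = z @ S \<Longrightarrow> z \<noteq> [] \<Longrightarrow>
   \<exists>h' hs \<beta>. h = h' @ hs \<and> morph_word f h' = z @ \<beta> \<and> length \<beta> < length (f (last h'))
     \<and> S = \<beta> @ morph_word f hs"
proof (induct h arbitrary: S rule: rev_induct)
  case (snoc b t)
  show ?case
  proof (cases "length S < length (f b)")
    case True
    then show ?thesis using snoc.prems
      by (intro exI[of _ "t @ [b]"] exI[of _ "[]"] exI[of _ S]) auto
  next
    case False
    from snoc.prems(1) have eq: "morph_word f t @ f b = z @ S" by simp
    have "length (morph_word f t) + length (f b) = length z + length S"
      using arg_cong[OF eq, of length] by simp
    with False have "length z \<le> length (morph_word f t)" by linarith
    with eq[symmetric] have "z = take (length z) (morph_word f t)"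
      "S = drop (length z) (morph_word f t) @ f b"
      by (simp_all add: append_eq_append_conv_if)
    then obtain S' where S': "S = S' @ f b" "morph_word f t = z @ S'"
      by (metis append_take_drop_id)
    from snoc.hyps[OF S'(2) snoc.prems(2)] obtain h' hs \<beta> where
      "t = h' @ hs" "morph_word f h' = z @ \<beta>" "length \<beta> < length (f (last h'))"
      "S' = \<beta> @ morph_word f hs"
      by auto
    with S' show ?thesis by (intro exI[of _ h'] exI[of _ "hs @ [b]"] exI[of _ \<beta>]) auto
  qed
qed simp

lemma min_cover_exists:
  assumes "\<And>b. b \<in> set h \<Longrightarrow> f b \<noteq> []" and "morph_word f h = P @ w @ S" and "w \<noteq> []"
  obtains hp v hs \<alpha> \<beta> where "h = hp @ v @ hs" "morph_word f v = \<alpha> @ w @ \<beta>"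
    "length \<alpha> < length (f (hd v))" "length \<beta> < length (f (last v))"
    "P = morph_word f hp @ \<alpha>" "S = \<beta> @ morph_word f hs"
proof -
  obtain hp h' \<alpha> where left: "h = hp @ h'" "morph_word f h' = \<alpha> @ w @ S"
    "length \<alpha> < length (f (hd h'))" "P = morph_word f hp @ \<alpha>"
    using morph_word_split_left[OF assms(1,2)] assms(3) by auto
  obtain v hs \<beta> where right: "h' = v @ hs" "morph_word f v = (\<alpha> @ w) @ \<beta>"
    "length \<beta> < length (f (last v))" "S = \<beta> @ morph_word f hs"
    using morph_word_split_right[of f h' "\<alpha> @ w" S] left(2) assms(3) by auto
  have "v \<noteq> []" using right(2) assms(3) by auto
  then have "hd h' = hd v" using right(1) by simp
  with left right show ?thesis by (intro that[of hp v hs \<alpha> \<beta>]) auto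
qed

lemma min_cover_with_margins:
  assumes "\<And>b. b \<in> set h \<Longrightarrow> f b \<noteq> [] \<and> length (f b) \<le> K"
    and "morph_word f h = P @ w @ S" and "w \<noteq> []"
  shows "\<exists>hp v hs. h = hp @ v @ hs \<and> min_cover f v w
     \<and> length P < K * Suc (length hp) \<and> length S < K * Suc (length hs)"
proof -
  obtain hp v hs \<alpha> \<beta> where cover: "h = hp @ v @ hs" "morph_word f v = \<alpha> @ w @ \<beta>"
    "length \<alpha> < length (f (hd v))" "length \<beta> < length (f (last v))"
    "P = morph_word f hp @ \<alpha>" "S = \<beta> @ morph_word f hs"
    using min_cover_exists[of h f P w S] assms by blast
  have "v \<noteq> []" using cover(2) assms(3) by auto
  then have "length \<alpha> < K" "length \<beta> < K"
    using cover(1,3,4) assms(1)[of "hd v"] assms(1)[of "last v"] by auto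
  moreover have "length (morph_word f hp) \<le> K * length hp" "length (morph_word f hs) \<le> K * length hs"
    using cover(1) assms(1) by (auto intro!: length_morph_word_le)
  ultimately have "length P < K * Suc (length hp)" "length S < K * Suc (length hs)"
    using cover(5,6) by auto
  with cover(1-4) show ?thesis unfolding min_cover_def by blast
qed

lemma min_cover_length_le:
  assumes "min_cover f v w" and "\<And>b. b \<in> set v \<Longrightarrow> f b \<noteq> [] \<and> length (f b) \<le> K"
  shows "length v \<le> length w + 2 * K"
proof (cases "v = []")
  case False
  obtain \<alpha> \<beta> where cover: "morph_word f v = \<alpha> @ w @ \<beta>"
    "length \<alpha> < length (f (hd v))" "length \<beta> < length (f (last v))"
    using assms(1) unfolding min_cover_def by blast
  have "length \<alpha> < K" "length \<beta> < K"
    using False cover(2,3) assms(2)[of "hd v"] assms(2)[of "last v"] by auto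
  moreover have "length v \<le> length (morph_word f v)"
    using assms(2) by (intro length_morph_word_ge) auto
  ultimately show ?thesis using cover(1) by simp
qed simp

lemma min_cover_two_letters:
  assumes "min_cover f v w" and "2 \<le> length v"
  shows "2 \<le> length w"
proof -
  obtain \<alpha> \<beta> where cover: "morph_word f v = \<alpha> @ w @ \<beta>"
    "length \<alpha> < length (f (hd v))" "length \<beta> < length (f (last v))"
    using assms(1) unfolding min_cover_def by blast
  obtain x y r where v: "v = x # y # r"
    using assms(2) by (cases v; cases "tl v") auto
  have "length (f (last (y # r))) \<le> length (morph_word f (y # r))"
    by (rule length_le_length_morph_word) simp
  then have "length (f (hd v)) + length (f (last v)) \<le> length (morph_word f v)"
    using v by simp
  also have "\<dots> = length \<alpha> + length w + length \<beta>"
    using cover(1) by simp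
  finally show ?thesis using cover(2,3) by linarith
qed

lemma min_cover_three_letters:
  assumes "min_cover f v w" and "3 \<le> length v"
  shows "length (f (v ! 1)) + 2 \<le> length w"
proof -
  obtain \<alpha> \<beta> where cover: "morph_word f v = \<alpha> @ w @ \<beta>"
    "length \<alpha> < length (f (hd v))" "length \<beta> < length (f (last v))"
    using assms(1) unfolding min_cover_def by blast
  obtain x y z r where v: "v = x # y # z # r"
    using assms(2) by (cases v; cases "tl v"; cases "tl (tl v)") auto
  have "length (f (last (z # r))) \<le> length (morph_word f (z # r))"
    by (rule length_le_length_morph_word) simp
  then have "length (f (hd v)) + length (f (v ! 1)) + length (f (last v)) \<le> length (morph_word f v)"
    using v by simp
  also have "\<dots> = length \<alpha> + length w + length \<beta>"
    using cover(1) by simp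
  finally show ?thesis using cover(2,3) by linarith
qed

lemma min_cover_length_le_two:
  assumes "min_cover f v w" and "w \<noteq> []" and "\<And>b. b \<in> set v \<Longrightarrow> length w \<le> length (f b)"
  shows "length v = 1 \<or> length v = 2"
proof -
  have "0 < length v"
    using assms(1,2) by (auto simp: min_cover_def)
  moreover have "\<not> 3 \<le> length v"
  proof
    assume "3 \<le> length v"
    then show False
      using min_cover_three_letters[OF assms(1)] assms(3)[of "v ! 1"] by fastforce
  qed
  ultimately show ?thesis
    by linarith
qed

lemma sublist_across_junction:
  assumes "D @ E = \<alpha> @ w @ \<beta>" "length \<alpha> < length D" "length \<beta> < length E"
    and "D = P @ X" "E = Y @ Q" "length w \<le> length X" "length w \<le> length Y"
  shows "sublist w (X @ Y)"
proof -
  have len: "length \<alpha> + length w + length \<beta> = length D + length E"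
    using arg_cong[OF assms(1), of length] by simp
  have "P @ (X @ E) = \<alpha> @ (w @ \<beta>)" "length P \<le> length \<alpha>"
    using assms len by auto
  then obtain \<alpha>' where \<alpha>': "\<alpha> = P @ \<alpha>'"
    by (metis append_eq_append_conv_if append_take_drop_id)
  have "(\<alpha> @ w) @ \<beta> = (D @ Y) @ Q" "length (\<alpha> @ w) \<le> length (D @ Y)"
    using assms len by auto
  then obtain \<beta>' where \<beta>': "\<beta> = \<beta>' @ Q"
    by (metis append_eq_append_conv_if)
  have "P @ X @ Y @ Q = P @ \<alpha>' @ w @ \<beta>' @ Q"
    using assms(1,4,5) \<alpha>' \<beta>' by simp
  then show ?thesis unfolding sublist_def by auto
qed

lemma sublist_junction_context:
  assumes "2 \<le> length X" and "2 \<le> length Y"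
  shows "\<exists>x y. sublist [x, last X, hd Y, y] (X @ Y)"
proof -
  have "X \<noteq> []" "butlast X \<noteq> []"
    using assms(1) by (auto simp flip: length_greater_0_conv)
  then have X: "X = butlast (butlast X) @ [last (butlast X), last X]"
    by (metis append_butlast_last_id append.assoc append_Cons append_Nil)
  obtain y Y' where Y: "Y = hd Y # y # Y'"
    using assms(2) by (cases Y; cases "tl Y") auto
  have "X @ Y = butlast (butlast X) @ [last (butlast X), last X, hd Y, y] @ Y'"
    by (subst X, subst Y) simp
  then show ?thesis by (metis sublist_appendI)
qed

section \<open>The language of a directive sequence\<close>

definition seq_lang :: "(nat \<Rightarrow> 'a set) \<Rightarrow> (nat \<Rightarrow> 'a \<Rightarrow> 'a list) \<Rightarrow> nat \<Rightarrow> 'a list set" where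
  "seq_lang A \<tau> n = {w. \<exists>N>n. \<exists>a\<in>A N. sublist w (tau_comp \<tau> n (N - n) a)}"

lemma mem_level_iff:
  "x \<in> level A \<tau> n \<longleftrightarrow> (\<forall>i. x i \<in> A n) \<and> (\<forall>l. central_word x l \<in> seq_lang A \<tau> n)"
  by (simp add: level_def seq_lang_def)

lemma tau_comp_in_seq_lang: "a \<in> A N \<Longrightarrow> n < N \<Longrightarrow> tau_comp \<tau> n (N - n) a \<in> seq_lang A \<tau> n"
  unfolding seq_lang_def by blast

lemma seq_lang_sublist: "w \<in> seq_lang A \<tau> n \<Longrightarrow> sublist v w \<Longrightarrow> v \<in> seq_lang A \<tau> n"
  unfolding seq_lang_def by (auto intro: sublist_order.order_trans)

lemma seq_lang_mono: "(\<And>m. B m \<subseteq> A m) \<Longrightarrow> seq_lang B \<tau> n \<subseteq> seq_lang A \<tau> n"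
  unfolding seq_lang_def by blast

lemma seq_lang_morph_word:
  assumes "w \<in> seq_lang A \<tau> (n + k)"
  shows "morph_word (tau_comp \<tau> n k) w \<in> seq_lang A \<tau> n"
proof -
  obtain N a where N: "n + k < N" "a \<in> A N" "sublist w (tau_comp \<tau> (n + k) (N - (n + k)) a)"
    using assms by (auto simp: seq_lang_def)
  have "morph_word (tau_comp \<tau> n k) (tau_comp \<tau> (n + k) (N - (n + k)) a) = tau_comp \<tau> n (N - n) a"
    using tau_comp_add[of \<tau> n k "N - (n + k)" a] N(1) by simp
  then have "sublist (morph_word (tau_comp \<tau> n k) w) (tau_comp \<tau> n (N - n) a)"
    using sublist_morph_word[OF N(3)] by metis
  then show ?thesis using N(1,2) unfolding seq_lang_def by (intro CollectI exI[of _ N]) auto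
qed

lemma seq_lang_desubstitute:
  assumes "w \<in> seq_lang A \<tau> n"
    and "\<And>j a. j \<le> k \<Longrightarrow> a \<in> A (n + j) \<Longrightarrow> length (tau_comp \<tau> n j a) < length w"
  shows "\<exists>h\<in>seq_lang A \<tau> (n + k). sublist w (morph_word (tau_comp \<tau> n k) h)"
proof -
  obtain N a where N: "n < N" "a \<in> A N" "sublist w (tau_comp \<tau> n (N - n) a)"
    using assms(1) by (auto simp: seq_lang_def)
  have "k < N - n"
  proof (rule ccontr)
    assume "\<not> k < N - n"
    then have "length (tau_comp \<tau> n (N - n) a) < length w"
      using assms(2)[of "N - n" a] N(1,2) by simp
    with sublist_length_le[OF N(3)] show False by simp
  qed
  then have "tau_comp \<tau> n (N - n) a = morph_word (tau_comp \<tau> n k) (tau_comp \<tau> (n + k) (N - (n + k)) a)"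
    using tau_comp_add[of \<tau> n k "N - (n + k)" a] by simp
  moreover have "tau_comp \<tau> (n + k) (N - (n + k)) a \<in> seq_lang A \<tau> (n + k)"
    using \<open>k < N - n\<close> N(2) by (intro tau_comp_in_seq_lang) auto
  ultimately show ?thesis using N(3) by auto
qed

definition extendable :: "(nat \<Rightarrow> 'a set) \<Rightarrow> (nat \<Rightarrow> 'a \<Rightarrow> 'a list) \<Rightarrow> nat \<Rightarrow> 'a list \<Rightarrow> bool" where
  "extendable A \<tau> n w \<longleftrightarrow>
     (\<forall>l. \<exists>p s. l \<le> length p \<and> l \<le> length s \<and> p @ w @ s \<in> seq_lang A \<tau> n)"

lemma extendable_in_seq_lang: "extendable A \<tau> n w \<Longrightarrow> w \<in> seq_lang A \<tau> n"
  unfolding extendable_def by (meson seq_lang_sublist sublist_appendI)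

lemma extendable_sublist:
  assumes "extendable A \<tau> n w" and "sublist v w"
  shows "extendable A \<tau> n v"
  unfolding extendable_def
proof
  fix l
  obtain p s where ps: "l \<le> length p" "l \<le> length s" "p @ w @ s \<in> seq_lang A \<tau> n"
    using assms(1) unfolding extendable_def by blast
  obtain p' s' where "w = p' @ v @ s'"
    using assms(2) unfolding sublist_def by blast
  with ps show "\<exists>p s. l \<le> length p \<and> l \<le> length s \<and> p @ v @ s \<in> seq_lang A \<tau> n"
    by (intro exI[of _ "p @ p'"] exI[of _ "s' @ s"]) auto
qed

lemma singleton_in_lang_iff: "[a] \<in> lang X \<longleftrightarrow> (\<exists>x\<in>X. \<exists>i. x i = a)"
  by (auto simp: lang_def)

section \<open>Central words\<close>

lemma central_word_extend:
  "\<exists>p s. length p = m \<and> length s = m \<and> central_word x (l + m) = p @ central_word x l @ s"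
proof -
  define c where "c = central_word x (l + m)"
  have mid: "take (Suc (2 * l)) (drop m c) = central_word x l"
    by (rule nth_equalityI) (auto simp: central_word_def c_def algebra_simps simp del: upt_Suc)
  have "c = take m c @ take (Suc (2 * l)) (drop m c) @ drop (Suc (2 * l)) (drop m c)"
    by (simp only: append_take_drop_id)
  moreover have "length c = Suc (2 * (l + m))"
    by (simp add: c_def central_word_def)
  ultimately show ?thesis
    unfolding mid c_def[symmetric]
    by (intro exI[of _ "take m c"] exI[of _ "drop (Suc (2 * l)) (drop m c)"]) auto
qed

lemma in_set_central_word: "x i \<in> set (central_word x (nat \<bar>i\<bar>))"
proof -
  have j: "nat (i + \<bar>i\<bar>) < Suc (2 * nat \<bar>i\<bar>)" "0 \<le> i + \<bar>i\<bar>"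
    by arith+
  then have "nat (i + \<bar>i\<bar>) < length (central_word x (nat \<bar>i\<bar>))"
    by (simp add: central_word_def)
  moreover have "central_word x (nat \<bar>i\<bar>) ! nat (i + \<bar>i\<bar>) = x i"
    using j by (simp add: central_word_def del: upt_Suc)
  ultimately show ?thesis by (metis nth_mem)
qed

lemma central_word_limit:
  assumes "length (z 0) = 1" and "\<And>k. \<exists>c d. z (Suc k) = c # z k @ [d]"
  shows "\<exists>x. \<forall>l. central_word x l = z l"
proof -
  have len: "length (z k) = Suc (2 * k)" for k
  proof (induct k)
    case (Suc k)
    then show ?case using assms(2)[of k] by auto
  qed (use assms(1) in simp)
  have nested: "z (k + d) ! (j + d) = z k ! j" if "j < Suc (2 * k)" for k d j
  proof (induct d)
    case (Suc d)
    obtain c e where "z (Suc (k + d)) = c # z (k + d) @ [e]" using assms(2) by blast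
    moreover have "j + d < length (z (k + d))" using len[of "k + d"] that by simp
    ultimately show ?case using Suc by (simp add: nth_append)
  qed simp
  \<comment> \<open>Position \<open>i\<close> is read off the first word \<open>z \<bar>i\<bar>\<close> reaching it.\<close>
  define x where "x i = z (nat \<bar>i\<bar>) ! nat (i + \<bar>i\<bar>)" for i :: int
  have "central_word x l = z l" for l
  proof (rule nth_equalityI)
    show "length (central_word x l) = length (z l)"
      using len[of l] by (simp add: central_word_def)
    fix i assume "i < length (central_word x l)"
    then have i: "i < Suc (2 * l)" by (simp add: central_word_def)
    define m where "m = nat \<bar>int i - int l\<bar>"
    define j where "j = nat (int i - int l + int m)"
    have mj: "m \<le> l" "j < Suc (2 * m)" "j + (l - m) = i"
      using i by (auto simp: m_def j_def)
    have "central_word x l ! i = x (int i - int l)"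
      using i by (simp add: central_word_def del: upt_Suc)
    also have "\<dots> = z m ! j"
      by (simp add: x_def m_def j_def)
    also have "\<dots> = z (m + (l - m)) ! (j + (l - m))"
      using nested[OF mj(2)] by simp
    also have "\<dots> = z l ! i"
      using mj by simp
    finally show "central_word x l ! i = z l ! i" .
  qed
  then show ?thesis by blast
qed

lemma central_word_extendable:
  assumes "x \<in> level A \<tau> n"
  shows "extendable A \<tau> n (central_word x l)"
  unfolding extendable_def
proof
  fix m
  obtain p s where ps: "length p = m" "length s = m"
    "central_word x (l + m) = p @ central_word x l @ s"
    using central_word_extend by blast
  moreover have "central_word x (l + m) \<in> seq_lang A \<tau> n"
    using assms by (simp add: mem_level_iff)
  ultimately show "\<exists>p s. m \<le> length p \<and> m \<le> length s \<and> p @ central_word x l @ s \<in> seq_lang A \<tau> n"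
    by (intro exI[of _ p] exI[of _ s]) simp
qed

section \<open>Extendable letters\<close>

lemma finite_uniform_witness:
  fixes P :: "nat \<Rightarrow> 'b \<Rightarrow> bool"
  assumes "finite F" and "\<And>l. \<exists>a\<in>F. P l a" and "\<And>l l' a. P l a \<Longrightarrow> l' \<le> l \<Longrightarrow> P l' a"
  shows "\<exists>a\<in>F. \<forall>l. P l a"
proof (rule ccontr)
  assume "\<not> ?thesis"
  then obtain g where g: "\<And>a. a \<in> F \<Longrightarrow> \<not> P (g a) a" by metis
  obtain a where a: "a \<in> F" "P (Max (g ` F)) a" using assms(2) by blast
  have "g a \<le> Max (g ` F)" using a(1) assms(1) by simp
  with a show False using assms(3) g by blast
qed

locale directive_sequence =
  fixes A :: "nat \<Rightarrow> 'a set" and \<tau> :: "nat \<Rightarrow> 'a \<Rightarrow> 'a list"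
  assumes directive: "directive_seq A \<tau>"
begin

lemma finite_alphabet: "finite (A n)"
  using directive by (simp add: directive_seq_def)

lemma tau_nonempty: "a \<in> A (Suc n) \<Longrightarrow> \<tau> n a \<noteq> []"
  using directive by (simp add: directive_seq_def)

lemma set_tau_subset: "a \<in> A (Suc n) \<Longrightarrow> set (\<tau> n a) \<subseteq> A n"
  using directive by (simp add: directive_seq_def)

lemma set_tau_comp_subset: "a \<in> A (n + k) \<Longrightarrow> set (tau_comp \<tau> n k a) \<subseteq> A n"
proof (induct k arbitrary: a)
  case (Suc k)
  then have "set (\<tau> (n + k) a) \<subseteq> A (n + k)" by (intro set_tau_subset) simp
  with Suc.hyps show ?case by (auto simp: set_morph_word)
qed simp

lemma tau_comp_nonempty: "a \<in> A (n + k) \<Longrightarrow> tau_comp \<tau> n k a \<noteq> []"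
proof (induct k arbitrary: a)
  case (Suc k)
  then have "\<tau> (n + k) a \<noteq> []" "set (\<tau> (n + k) a) \<subseteq> A (n + k)"
    by (simp_all add: tau_nonempty set_tau_subset)
  with Suc.hyps show ?case by (simp, intro morph_word_nonempty) auto
qed simp

lemma tau_comp_length_bounded: "\<exists>B. \<forall>j\<le>k. \<forall>a\<in>A (n + j). length (tau_comp \<tau> n j a) \<le> B"
proof -
  have "finite (\<Union>j\<le>k. (\<lambda>a. length (tau_comp \<tau> n j a)) ` A (n + j))"
    using finite_alphabet by auto
  then show ?thesis by (meson UN_I atMost_iff finite_nat_set_iff_bounded_le imageI)
qed

lemma set_seq_lang_subset: "w \<in> seq_lang A \<tau> n \<Longrightarrow> set w \<subseteq> A n"
proof -
  assume "w \<in> seq_lang A \<tau> n"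
  then obtain N a where "n < N" "a \<in> A N" "sublist w (tau_comp \<tau> n (N - n) a)"
    by (auto simp: seq_lang_def)
  then show ?thesis
    using set_tau_comp_subset[of a n "N - n"] set_mono_sublist by fastforce
qed

lemma extendable_extend:
  assumes "extendable A \<tau> n z"
  shows "\<exists>c d. extendable A \<tau> n (c # z @ [d])"
proof -
  define P where "P l cd \<longleftrightarrow> (\<exists>p s. l \<le> length p \<and> l \<le> length s \<and>
    p @ (fst cd # z @ [snd cd]) @ s \<in> seq_lang A \<tau> n)" for l cd
  have "\<exists>cd\<in>A n \<times> A n. \<forall>l. P l cd"
  proof (rule finite_uniform_witness)
    show "finite (A n \<times> A n)" using finite_alphabet by simp
    show "\<exists>cd\<in>A n \<times> A n. P l cd" for l
    proof -
      obtain p s where ps: "Suc l \<le> length p" "Suc l \<le> length s" "p @ z @ s \<in> seq_lang A \<tau> n"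
        using assms unfolding extendable_def by blast
      then have "p \<noteq> []" "s \<noteq> []" by auto
      then have "butlast p @ (last p # z @ [hd s]) @ tl s = p @ z @ s"
        by simp
      moreover have "last p \<in> A n" "hd s \<in> A n"
        using set_seq_lang_subset[OF ps(3)] \<open>p \<noteq> []\<close> \<open>s \<noteq> []\<close> by auto
      ultimately show ?thesis
        using ps unfolding P_def
        by (intro bexI[of _ "(last p, hd s)"] exI[of _ "butlast p"] exI[of _ "tl s"]) auto
    qed
    show "P l cd \<Longrightarrow> l' \<le> l \<Longrightarrow> P l' cd" for l l' cd
      unfolding P_def by force
  qed
  then show ?thesis unfolding extendable_def P_def by auto
qed

lemma extendable_letter_in_lang:
  assumes "extendable A \<tau> n [a]"
  shows "[a] \<in> lang (level A \<tau> n)"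
proof -
  have "\<forall>z. \<exists>z'. extendable A \<tau> n z \<longrightarrow> extendable A \<tau> n z' \<and> (\<exists>c d. z' = c # z @ [d])"
    using extendable_extend by blast
  then obtain grow where grow: "\<And>z. extendable A \<tau> n z \<Longrightarrow>
      extendable A \<tau> n (grow z) \<and> (\<exists>c d. grow z = c # z @ [d])"
    by metis
  define z where "z k = (grow ^^ k) [a]" for k
  have ext: "extendable A \<tau> n (z k)" for k
    by (induct k) (simp_all add: z_def assms grow)
  have "\<exists>c d. z (Suc k) = c # z k @ [d]" for k
    using grow[OF ext[of k]] by (simp add: z_def)
  then obtain x where x: "\<And>l. central_word x l = z l"
    using central_word_limit[of z] by (auto simp: z_def)
  have "x \<in> level A \<tau> n"
    unfolding mem_level_iff
  proof (intro conjI allI)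
    show words: "central_word x l \<in> seq_lang A \<tau> n" for l
      using x extendable_in_seq_lang[OF ext] by simp
    show "x i \<in> A n" for i
      using in_set_central_word set_seq_lang_subset[OF words] by blast
  qed
  moreover have "x 0 = a"
    using x[of 0] by (simp add: central_word_def z_def)
  ultimately show ?thesis unfolding singleton_in_lang_iff by blast
qed

lemma singleton_in_lang_level_iff: "[a] \<in> lang (level A \<tau> n) \<longleftrightarrow> extendable A \<tau> n [a]"
proof
  assume "[a] \<in> lang (level A \<tau> n)"
  then obtain x i where "x \<in> level A \<tau> n" "x i = a"
    by (auto simp: singleton_in_lang_iff)
  then show "extendable A \<tau> n [a]"
    using central_word_extendable in_set_central_word sublist_singleton extendable_sublist by metis
qed (rule extendable_letter_in_lang)

lemma extendable_cover_with_margins: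
  assumes "extendable A \<tau> n w" and "w \<noteq> []"
    and B: "\<And>j a. j \<le> k \<Longrightarrow> a \<in> A (n + j) \<Longrightarrow> length (tau_comp \<tau> n j a) \<le> B"
  shows "\<exists>v. set v \<subseteq> A (n + k) \<and> length v \<le> length w + 2 * B \<and> min_cover (tau_comp \<tau> n k) v w
    \<and> (\<exists>p s. l \<le> length p \<and> l \<le> length s \<and> p @ v @ s \<in> seq_lang A \<tau> (n + k))"
proof -
  let ?f = "tau_comp \<tau> n k"
  \<comment> \<open>Margins of length \<open>B * Suc l\<close> around \<open>w\<close> leave at least \<open>l\<close> letters of the
    preimage on each side.\<close>
  obtain p s where ps: "B * Suc l \<le> length p" "B * Suc l \<le> length s" "p @ w @ s \<in> seq_lang A \<tau> n"
    using assms(1) unfolding extendable_def by blast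
  moreover have "B < length (p @ w @ s)"
    using ps(1) assms(2) by (cases w) auto
  ultimately obtain h where h: "h \<in> seq_lang A \<tau> (n + k)" "sublist (p @ w @ s) (morph_word ?f h)"
    using seq_lang_desubstitute[of "p @ w @ s" A \<tau> n k] B by (meson le_less_trans)
  then obtain \<gamma> \<delta> where "morph_word ?f h = (\<gamma> @ p) @ w @ (s @ \<delta>)"
    by (auto simp: sublist_def)
  moreover have h_letters: "?f b \<noteq> [] \<and> length (?f b) \<le> B" if "b \<in> set h" for b
    using that set_seq_lang_subset[OF h(1)] tau_comp_nonempty B[of k b] by auto
  ultimately obtain hp v hs where cover: "h = hp @ v @ hs" "min_cover ?f v w"
    "length (\<gamma> @ p) < B * Suc (length hp)" "length (s @ \<delta>) < B * Suc (length hs)"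
    using min_cover_with_margins[of h ?f B] assms(2) by blast
  have "B * Suc l < B * Suc (length hp)" "B * Suc l < B * Suc (length hs)"
    using ps(1,2) cover(3,4) by (simp_all only: length_append)
  then have "l \<le> length hp" "l \<le> length hs"
    by simp_all
  moreover have "length v \<le> length w + 2 * B"
    using min_cover_length_le[OF cover(2)] h_letters cover(1) by simp
  moreover have "set v \<subseteq> A (n + k)"
    using set_seq_lang_subset[OF h(1)] cover(1) by auto
  ultimately show ?thesis
    using h(1) cover(1,2) by auto
qed

lemma extendable_desubstitute:
  assumes "extendable A \<tau> n w" and "w \<noteq> []"
  shows "\<exists>v. extendable A \<tau> (n + k) v \<and> min_cover (tau_comp \<tau> n k) v w"
proof -
  obtain B where B: "\<And>j a. j \<le> k \<Longrightarrow> a \<in> A (n + j) \<Longrightarrow> length (tau_comp \<tau> n j a) \<le> B"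
    using tau_comp_length_bounded by blast
  define P where "P l v \<longleftrightarrow> min_cover (tau_comp \<tau> n k) v w \<and>
    (\<exists>p s. l \<le> length p \<and> l \<le> length s \<and> p @ v @ s \<in> seq_lang A \<tau> (n + k))" for l v
  \<comment> \<open>Covers have bounded length, so one of them has margins for every \<open>l\<close>.\<close>
  have "\<exists>v\<in>{v. set v \<subseteq> A (n + k) \<and> length v \<le> length w + 2 * B}. \<forall>l. P l v"
  proof (rule finite_uniform_witness)
    show "finite {v. set v \<subseteq> A (n + k) \<and> length v \<le> length w + 2 * B}"
      by (rule finite_lists_length_le[OF finite_alphabet])
    show "\<exists>v\<in>{v. set v \<subseteq> A (n + k) \<and> length v \<le> length w + 2 * B}. P l v" for l
      using extendable_cover_with_margins[OF assms B] unfolding P_def by blast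
    show "P l v \<Longrightarrow> l' \<le> l \<Longrightarrow> P l' v" for l l' v
      unfolding P_def by force
  qed
  then show ?thesis unfolding P_def extendable_def by blast
qed

lemma extendable_image:
  assumes "extendable A \<tau> (Suc n) [a]" and "b \<in> set (\<tau> n a)"
  shows "extendable A \<tau> n [b]"
proof -
  have "extendable A \<tau> n (morph_word (\<tau> n) [a])"
    unfolding extendable_def
  proof
    fix l
    obtain p s where ps: "l \<le> length p" "l \<le> length s" "p @ [a] @ s \<in> seq_lang A \<tau> (Suc n)"
      using assms(1) unfolding extendable_def by blast
    then have "morph_word (\<tau> n) (p @ [a] @ s) \<in> seq_lang A \<tau> n"
      using seq_lang_morph_word[of "p @ [a] @ s" A \<tau> n 1] by (simp add: tau_comp_one)
    moreover have "length p \<le> length (morph_word (\<tau> n) p)" "length s \<le> length (morph_word (\<tau> n) s)"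
      using set_seq_lang_subset[OF ps(3)] tau_nonempty by (auto intro!: length_morph_word_ge)
    ultimately show "\<exists>p' s'. l \<le> length p' \<and> l \<le> length s' \<and>
        p' @ morph_word (\<tau> n) [a] @ s' \<in> seq_lang A \<tau> n"
      using ps(1,2) by (intro exI[of _ "morph_word (\<tau> n) p"] exI[of _ "morph_word (\<tau> n) s"]) auto
  qed
  then show ?thesis
    using assms(2) by (simp add: extendable_sublist sublist_singleton)
qed

lemma extendable_preimage:
  assumes "extendable A \<tau> n [b]"
  shows "\<exists>a. extendable A \<tau> (Suc n) [a] \<and> b \<in> set (\<tau> n a)"
proof -
  obtain v where v: "extendable A \<tau> (n + 1) v" "min_cover (\<tau> n) v [b]"
    using extendable_desubstitute[OF assms, of 1] by (auto simp: tau_comp_one)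
  then have "v \<noteq> []"
    by (auto simp: min_cover_def)
  moreover have "\<not> 2 \<le> length v"
    using min_cover_two_letters[OF v(2)] by auto
  ultimately obtain a where "v = [a]"
    by (cases v; cases "tl v") auto
  with v show ?thesis
    by (auto simp: min_cover_def)
qed

definition extendable_letters :: "nat \<Rightarrow> 'a set" where
  "extendable_letters n = {a. extendable A \<tau> n [a]}"

lemma extendable_letters_subset: "extendable_letters n \<subseteq> A n"
  using extendable_in_seq_lang set_seq_lang_subset by (fastforce simp: extendable_letters_def)

lemma set_tau_extendable_letters:
  "a \<in> extendable_letters (Suc n) \<Longrightarrow> set (\<tau> n a) \<subseteq> extendable_letters n"
  using extendable_image by (auto simp: extendable_letters_def)

lemma letter_onto_extendable_letters: "letter_onto_seq extendable_letters \<tau>"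
  using extendable_preimage by (auto simp: letter_onto_seq_def extendable_letters_def)

end

section \<open>Proper everywhere growing sequences\<close>

locale proper_growing_directive_sequence = directive_sequence +
  fixes U V :: "nat \<Rightarrow> 'a"
  assumes growing: "everywhere_growing A \<tau>"
    and hd_tau: "\<And>n a. a \<in> A (Suc n) \<Longrightarrow> hd (\<tau> n a) = U n"
    and last_tau: "\<And>n a. a \<in> A (Suc n) \<Longrightarrow> last (\<tau> n a) = V n"
begin

lemma tau_comp_growing: "\<exists>N0\<ge>n. \<forall>N\<ge>N0. \<forall>a\<in>A N. L \<le> length (tau_comp \<tau> n (N - n) a)"
proof -
  obtain B where "\<forall>j\<le>n. \<forall>b\<in>A (0 + j). length (tau_comp \<tau> 0 j b) \<le> B"
    using tau_comp_length_bounded by blast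
  then have K: "\<And>b. b \<in> A n \<Longrightarrow> length (tau_comp \<tau> 0 n b) \<le> Suc B"
    by fastforce
  obtain N0 where N0: "\<forall>N\<ge>N0. \<forall>a\<in>A N. L * Suc B \<le> length (tau_comp \<tau> 0 N a)"
    using growing unfolding everywhere_growing_def by blast
  show ?thesis
  proof (intro exI[of _ "max N0 n"] conjI allI impI ballI)
    fix N a assume N: "max N0 n \<le> N" and a: "a \<in> A N"
    have "tau_comp \<tau> 0 N a = morph_word (tau_comp \<tau> 0 n) (tau_comp \<tau> n (N - n) a)"
      using tau_comp_add[of \<tau> 0 n "N - n" a] N by simp
    moreover have "set (tau_comp \<tau> n (N - n) a) \<subseteq> A n"
      using set_tau_comp_subset[of a n "N - n"] a N by simp
    moreover have "length (morph_word (tau_comp \<tau> 0 n) (tau_comp \<tau> n (N - n) a))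
        \<le> Suc B * length (tau_comp \<tau> n (N - n) a)"
      by (rule length_morph_word_le) (use K \<open>set _ \<subseteq> A n\<close> in blast)
    ultimately have "length (tau_comp \<tau> 0 N a) \<le> Suc B * length (tau_comp \<tau> n (N - n) a)"
      by simp
    moreover have "L * Suc B \<le> length (tau_comp \<tau> 0 N a)"
      using N0 N a by auto
    ultimately show "L \<le> length (tau_comp \<tau> n (N - n) a)"
      by (metis mult.commute mult_le_cancel1 order_trans zero_less_Suc)
  qed simp
qed

lemma hd_last_tau_comp:
  assumes "0 < k" and "a \<in> A (n + k)"
  shows "hd (tau_comp \<tau> n k a) = U n \<and> last (tau_comp \<tau> n k a) = V n"
proof -
  obtain k' where k: "k = Suc k'" using assms(1) by (cases k) auto
  let ?g = "tau_comp \<tau> (Suc n) k' a"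
  have g: "?g \<noteq> []" "set ?g \<subseteq> A (Suc n)"
    using tau_comp_nonempty[of a "Suc n" k'] set_tau_comp_subset[of a "Suc n" k'] assms(2) k by auto
  then have "hd ?g \<in> A (Suc n)" "last ?g \<in> A (Suc n)" by auto
  then have "hd (morph_word (\<tau> n) ?g) = U n" "last (morph_word (\<tau> n) ?g) = V n"
    using hd_morph_word[OF g(1)] last_morph_word[OF g(1)] tau_nonempty hd_tau last_tau by simp_all
  moreover have "tau_comp \<tau> n k a = morph_word (\<tau> n) ?g"
    using k tau_comp_Suc_left by simp
  ultimately show ?thesis by simp
qed

lemma U_V_in_alphabet: "A (Suc n) \<noteq> {} \<Longrightarrow> U n \<in> A n \<and> V n \<in> A n"
proof -
  assume "A (Suc n) \<noteq> {}"
  then obtain a where a: "a \<in> A (Suc n)" by auto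
  then have "hd (\<tau> n a) \<in> set (\<tau> n a)" "last (\<tau> n a) \<in> set (\<tau> n a)"
    using tau_nonempty by auto
  then show ?thesis using a hd_tau last_tau set_tau_subset by fastforce
qed

lemma junction_sublist:
  assumes "a \<in> A (Suc n)" and "b \<in> A (Suc n)"
  shows "sublist [V n, U n] (\<tau> n a @ \<tau> n b)"
proof -
  have "\<tau> n a = butlast (\<tau> n a) @ [V n]"
    using assms(1) tau_nonempty last_tau by (metis append_butlast_last_id)
  moreover have "\<tau> n b = U n # tl (\<tau> n b)"
    using assms(2) tau_nonempty hd_tau by (metis list.collapse)
  ultimately have "\<tau> n a @ \<tau> n b = butlast (\<tau> n a) @ [V n, U n] @ tl (\<tau> n b)"
    by (metis append.assoc append_Cons append_Nil)
  then show ?thesis by (metis sublist_appendI)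
qed

lemma junction_in_seq_lang:
  assumes "\<And>M. B M \<subseteq> A M" and "\<And>M. K < M \<Longrightarrow> B M \<noteq> {}"
  shows "[V K, U K] \<in> seq_lang B \<tau> K"
proof -
  obtain N0 where N0: "Suc K \<le> N0" "\<forall>N\<ge>N0. \<forall>a\<in>A N. 2 \<le> length (tau_comp \<tau> (Suc K) (N - Suc K) a)"
    using tau_comp_growing by blast
  obtain f where f: "f \<in> B (Suc N0)" using assms(2)[of "Suc N0"] N0(1) by auto
  let ?g = "tau_comp \<tau> (Suc K) (N0 - K) f"
  have "f \<in> A (Suc N0)" using f assms(1) by auto
  then have "set ?g \<subseteq> A (Suc K)" "2 \<le> length ?g"
    using set_tau_comp_subset[of f "Suc K" "N0 - K"] N0(1) N0(2)[rule_format, of "Suc N0" f] by auto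
  then obtain g1 g2 r where g: "?g = g1 # g2 # r" "g1 \<in> A (Suc K)" "g2 \<in> A (Suc K)"
    by (cases ?g; cases "tl ?g") auto
  have "sublist [V K, U K] (\<tau> K g1 @ \<tau> K g2)"
    using junction_sublist g(2,3) .
  moreover have "tau_comp \<tau> K (Suc N0 - K) f = \<tau> K g1 @ \<tau> K g2 @ morph_word (\<tau> K) r"
    using tau_comp_Suc_left[of \<tau> K "N0 - K" f] g(1) N0(1) by (simp add: Suc_diff_le)
  then have "sublist (\<tau> K g1 @ \<tau> K g2) (tau_comp \<tau> K (Suc N0 - K) f)"
    by (metis append.assoc sublist_append_rightI)
  moreover have "tau_comp \<tau> K (Suc N0 - K) f \<in> seq_lang B \<tau> K"
    using f N0(1) by (intro tau_comp_in_seq_lang) auto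
  ultimately show ?thesis
    by (meson seq_lang_sublist sublist_order.order_trans)
qed

lemma junction_context:
  assumes "\<And>M. K < M \<Longrightarrow> A M \<noteq> {}"
  shows "\<exists>x y. [x, V K, U K, y] \<in> seq_lang A \<tau> K"
proof -
  obtain N0 where N0: "K \<le> N0" "\<forall>N\<ge>N0. \<forall>a\<in>A N. 2 \<le> length (tau_comp \<tau> K (N - K) a)"
    using tau_comp_growing by blast
  define M where "M = Suc N0"
  let ?f = "tau_comp \<tau> K (M - K)"
  have M: "K < M" "K + (M - K) = M" "0 < M - K"
    using N0(1) by (auto simp: M_def)
  have "[V M, U M] \<in> seq_lang A \<tau> (K + (M - K))"
    using junction_in_seq_lang[of A M] assms M(1) by simp
  then have XY: "?f (V M) @ ?f (U M) \<in> seq_lang A \<tau> K"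
    using seq_lang_morph_word by fastforce
  have UV: "U M \<in> A M" "V M \<in> A M"
    using U_V_in_alphabet assms M(1) by auto
  then have "2 \<le> length (?f (V M))" "2 \<le> length (?f (U M))"
    using N0(2) by (auto simp: M_def)
  moreover have "last (?f (V M)) = V K" "hd (?f (U M)) = U K"
    using hd_last_tau_comp[OF M(3)] UV M(2) by simp_all
  ultimately show ?thesis
    using sublist_junction_context seq_lang_sublist[OF XY] by metis
qed

lemma letter_context:
  assumes "letter_onto_seq A \<tau>" and "b \<in> A n"
  shows "\<exists>d e. [d, b, e] \<in> seq_lang A \<tau> n"
proof -
  obtain c where c: "c \<in> A (Suc n)" "b \<in> set (\<tau> n c)"
    using assms unfolding letter_onto_seq_def by blast
  then obtain \<alpha> \<beta> where \<alpha>\<beta>: "\<tau> n c = \<alpha> @ b # \<beta>"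
    by (meson split_list)
  have "\<tau> n c \<in> seq_lang A \<tau> n"
    using tau_comp_in_seq_lang[of c A "Suc n" n \<tau>] c(1) by (simp add: tau_comp_one)
  moreover have "A M \<noteq> {}" if "n < M" for M
    using letter_onto_seq_tau_comp[OF assms, of "M - n"] that by auto
  then obtain x y where xy: "[x, V n, U n, y] \<in> seq_lang A \<tau> n"
    using junction_context by blast
  consider "\<alpha> = []" | "\<beta> = []" | "\<alpha> \<noteq> []" "\<beta> \<noteq> []" by blast
  then show ?thesis
  proof cases
    case 1
    then have "b = U n" using hd_tau[OF c(1)] \<alpha>\<beta> by simp
    then have "sublist [V n, b, y] [x, V n, U n, y]"
      by (metis append_Cons append_Nil sublist_append_leftI)
    then show ?thesis using seq_lang_sublist[OF xy] by blast
  next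
    case 2
    then have "b = V n" using last_tau[OF c(1)] \<alpha>\<beta> by simp
    then have "sublist [x, b, U n] [x, V n, U n, y]"
      by (metis append_Cons append_Nil sublist_append_rightI)
    then show ?thesis using seq_lang_sublist[OF xy] by blast
  next
    case 3
    then have "\<tau> n c = butlast \<alpha> @ [last \<alpha>, b, hd \<beta>] @ tl \<beta>"
      using \<alpha>\<beta> by simp
    then show ?thesis
      using seq_lang_sublist[OF \<open>\<tau> n c \<in> seq_lang A \<tau> n\<close>] by (metis sublist_appendI)
  qed
qed

lemma letter_onto_extendable:
  assumes "letter_onto_seq A \<tau>" and "a \<in> A n"
  shows "extendable A \<tau> n [a]"
  unfolding extendable_def
proof
  fix l
  obtain N0 where N0: "n \<le> N0" "\<forall>N\<ge>N0. \<forall>b\<in>A N. l \<le> length (tau_comp \<tau> n (N - n) b)"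
    using tau_comp_growing by blast
  define N where "N = Suc N0"
  let ?f = "tau_comp \<tau> n (N - n)"
  have N: "n + (N - n) = N"
    using N0(1) by (simp add: N_def)
  obtain b where b: "b \<in> A N" "a \<in> set (?f b)"
    using letter_onto_seq_tau_comp[OF assms, of "N - n"] N by auto
  obtain d e where de: "[d, b, e] \<in> seq_lang A \<tau> N"
    using letter_context[OF assms(1) b(1)] by blast
  then have "?f d @ ?f b @ ?f e \<in> seq_lang A \<tau> n"
    using seq_lang_morph_word[of "[d, b, e]" A \<tau> n "N - n"] N by simp
  moreover obtain \<alpha> \<beta> where "?f b = \<alpha> @ a # \<beta>"
    using b(2) by (meson split_list)
  moreover have "l \<le> length (?f d)" "l \<le> length (?f e)"
    using N0(2) set_seq_lang_subset[OF de] by (auto simp: N_def)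
  ultimately show "\<exists>p s. l \<le> length p \<and> l \<le> length s \<and> p @ [a] @ s \<in> seq_lang A \<tau> n"
    by (intro exI[of _ "?f d @ \<alpha>"] exI[of _ "\<beta> @ ?f e"]) auto
qed

lemma min_cover_two_letters_junction:
  assumes "min_cover (tau_comp \<tau> n (Suc k)) [d, e] w"
    and "d \<in> A (Suc (n + k))" and "e \<in> A (Suc (n + k))"
    and "\<And>b. b \<in> A (n + k) \<Longrightarrow> length w \<le> length (tau_comp \<tau> n k b)"
  shows "sublist w (morph_word (tau_comp \<tau> n k) [V (n + k), U (n + k)])"
proof -
  let ?f = "tau_comp \<tau> n k"
  obtain \<alpha> \<beta> where cover: "tau_comp \<tau> n (Suc k) d @ tau_comp \<tau> n (Suc k) e = \<alpha> @ w @ \<beta>"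
    "length \<alpha> < length (tau_comp \<tau> n (Suc k) d)" "length \<beta> < length (tau_comp \<tau> n (Suc k) e)"
    using assms(1) unfolding min_cover_def by auto
  have "\<tau> (n + k) d = butlast (\<tau> (n + k) d) @ [V (n + k)]"
    using assms(2) tau_nonempty last_tau by (metis append_butlast_last_id)
  then have D: "tau_comp \<tau> n (Suc k) d = morph_word ?f (butlast (\<tau> (n + k) d)) @ ?f (V (n + k))"
    by (metis tau_comp.simps(2) morph_word_append morph_word_Cons morph_word_Nil append_Nil2)
  have "\<tau> (n + k) e = U (n + k) # tl (\<tau> (n + k) e)"
    using assms(3) tau_nonempty hd_tau by (metis list.collapse)
  then have E: "tau_comp \<tau> n (Suc k) e = ?f (U (n + k)) @ morph_word ?f (tl (\<tau> (n + k) e))"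
    by (metis tau_comp.simps(2) morph_word_Cons)
  have "U (n + k) \<in> A (n + k)" "V (n + k) \<in> A (n + k)"
    using U_V_in_alphabet assms(2) by blast+
  then show ?thesis
    using sublist_across_junction[OF cover D E] assms(4) by simp
qed

lemma extendable_in_seq_lang_extendable_letters:
  assumes "extendable A \<tau> n w" and "w \<noteq> []"
  shows "w \<in> seq_lang extendable_letters \<tau> n"
proof -
  have "hd w \<in> extendable_letters n"
    using extendable_sublist[OF assms(1)] assms(2)
    by (simp add: extendable_letters_def sublist_singleton)
  then have nonempty: "extendable_letters M \<noteq> {}" if "n \<le> M" for M
    using letter_onto_seq_tau_comp[OF letter_onto_extendable_letters, of "hd w" n "M - n"] that
    by auto
  \<comment> \<open>Desubstitute to a level whose images are all at least as long as \<open>w\<close>.\<close>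
  obtain N where N: "n \<le> N" "\<forall>N'\<ge>N. \<forall>a\<in>A N'. length w \<le> length (tau_comp \<tau> n (N' - n) a)"
    using tau_comp_growing by blast
  define k where "k = N - n"
  have long: "length w \<le> length (tau_comp \<tau> n j b)" if "k \<le> j" "b \<in> A (n + j)" for j b
    using N(1) N(2)[rule_format, of "n + j" b] that by (simp add: k_def)
  obtain v where v: "extendable A \<tau> (n + Suc k) v" "min_cover (tau_comp \<tau> n (Suc k)) v w"
    using extendable_desubstitute[OF assms] by blast
  have v_letters: "set v \<subseteq> A (n + Suc k)"
    using set_seq_lang_subset[OF extendable_in_seq_lang[OF v(1)]] .
  then have "length w \<le> length (tau_comp \<tau> n (Suc k) b)" if "b \<in> set v" for b
    using long[of "Suc k" b] that by auto
  then have "length v = 1 \<or> length v = 2"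
    using min_cover_length_le_two[OF v(2) assms(2)] by blast
  then consider a where "v = [a]" | d e where "v = [d, e]"
    by (auto simp: length_Suc_conv numeral_2_eq_2)
  then show ?thesis
  proof cases
    case 1
    then have "a \<in> extendable_letters (n + Suc k)" "sublist w (tau_comp \<tau> n (Suc k) a)"
      using v by (auto simp: extendable_letters_def min_cover_def)
    then show ?thesis
      unfolding seq_lang_def by (intro CollectI exI[of _ "n + Suc k"]) auto
  next
    case 2
    then have "sublist w (morph_word (tau_comp \<tau> n k) [V (n + k), U (n + k)])"
      using min_cover_two_letters_junction v(2) v_letters long[of k] by simp
    moreover have "[V (n + k), U (n + k)] \<in> seq_lang extendable_letters \<tau> (n + k)"
      using junction_in_seq_lang extendable_letters_subset nonempty by simp
    ultimately show ?thesis
      using seq_lang_morph_word seq_lang_sublist by blast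
  qed
qed

lemma level_extendable_letters: "level extendable_letters \<tau> n = level A \<tau> n"
proof
  show "level extendable_letters \<tau> n \<subseteq> level A \<tau> n"
  proof
    fix x assume "x \<in> level extendable_letters \<tau> n"
    then show "x \<in> level A \<tau> n"
      using extendable_letters_subset seq_lang_mono[of extendable_letters A \<tau> n]
      unfolding mem_level_iff by blast
  qed
  show "level A \<tau> n \<subseteq> level extendable_letters \<tau> n"
  proof
    fix x assume x: "x \<in> level A \<tau> n"
    then have "x i \<in> extendable_letters n" for i
      by (auto simp: extendable_letters_def singleton_in_lang_level_iff[symmetric] singleton_in_lang_iff)
    moreover have "central_word x l \<in> seq_lang extendable_letters \<tau> n" for l
      using extendable_in_seq_lang_extendable_letters[OF central_word_extendable[OF x]]
      by (simp add: central_word_def)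
    ultimately show "x \<in> level extendable_letters \<tau> n"
      unfolding mem_level_iff by blast
  qed
qed

end

theorem lemma4p6:
  fixes A :: "nat \<Rightarrow> 'a set" and \<tau> :: "nat \<Rightarrow> 'a \<Rightarrow> 'a list"
  assumes "directive_seq A \<tau>" and "everywhere_growing A \<tau>" and "proper_seq A \<tau>"
  defines "At \<equiv> (\<lambda>n. {a \<in> A n. [a] \<in> lang (level A \<tau> n)})"
  shows "(\<forall>n. \<forall>a\<in>At (Suc n). set (\<tau> n a) \<subseteq> At n)
       \<and> letter_onto_seq At \<tau>
       \<and> (\<forall>n. level At \<tau> n = level A \<tau> n)
       \<and> (letter_onto_seq A \<tau> \<longrightarrow> (\<forall>n. A n \<subseteq> {a. [a] \<in> lang (level A \<tau> n)}))"
proof -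
  obtain U V where "\<And>n a. a \<in> A (Suc n) \<Longrightarrow> hd (\<tau> n a) = U n"
    and "\<And>n a. a \<in> A (Suc n) \<Longrightarrow> last (\<tau> n a) = V n"
    using assms(3) unfolding proper_seq_def by metis
  then interpret proper_growing_directive_sequence A \<tau> U V
    using assms(1,2) by unfold_locales
  have "At n = extendable_letters n" for n
    using extendable_letters_subset[of n]
    by (auto simp: At_def extendable_letters_def singleton_in_lang_level_iff)
  then have "At = extendable_letters" ..
  then show ?thesis
    using set_tau_extendable_letters letter_onto_extendable_letters level_extendable_letters
      letter_onto_extendable
    by (auto simp: singleton_in_lang_level_iff)
qed

end
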